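(* Let $m\ge 2$, $n\ge1$ be integers, let $\mathcal P=(p_{i_1 i_2\dots i_m})\in\mathbb R^{[m,n]}$ be a transition probability tensor with first-index flattening $R\in\mathbb R^{n\times n^{m-1}}$, let $v\in\mathbb R^n$ be a stochastic vector, and let $\alpha\in[0,1)$ satisfy $\alpha<\frac{1}{m-1}$. Define $f(\mathbf{x})=\alpha R(\mathbf{x}\otimes\cdots\otimes\mathbf{x})+(1-\alpha)v-\mathbf{x}$ (with $m-1$ Kronecker factors $\mathbf{x}$) and $$J_f(\mathbf{x})=\alpha R\Big(I\otimes\mathbf{x}\otimes\cdots\otimes\mathbf{x}+\mathbf{x}\otimes I\otimes\mathbf{x}\otimes\cdots\otimes\mathbf{x}+\cdots+\mathbf{x}\otimes\cdots\otimes\mathbf{x}\otimes I\Big)-I.$$ Then the Newton iteration $\mathbf{x}_{k+1}=\mathbf{x}_k-J_f(\mathbf{x}_k)^{-1}f(\mathbf{x}_k)$, $k=0,1,2,\dots$, started from $\mathbf{x}_0=0$, converges quadratically to the unique solution $\mathbf{x}$ of the multilinear PageRank equation $\mathbf{x}=\alpha R(\mathbf{x}\otimes\cdots\otimes\mathbf{x})+(1-\alpha)v$.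
   Context: A transition probability tensor $\mathcal P\in\mathbb R^{[m,n]}$ (order $m$, each dimension $n$) satisfies $p_{i_1\dots i_m}\ge0$ and $\sum_{i_1=1}^n p_{i_1 i_2\dots i_m}=1$ for all $(i_2,\dots,i_m)$. A vector is stochastic if its entries are non-negative and sum to one. The flattening $R$ along the first index is the $n\times n^{m-1}$ matrix with $\big(R(y^{(2)}\otimes\cdots\otimes y^{(m)})\big)_i=\sum_{i_2,\dots,i_m=1}^n p_{i i_2\dots i_m}y^{(2)}_{i_2}\cdots y^{(m)}_{i_m}$ for all $y^{(j)}\in\mathbb R^n$. $I$ is the $n\times n$ identity, $\otimes$ the Kronecker product; in the Jacobian, each of the $m-1$ summands is a Kronecker product of $m-1$ factors with $I$ in exactly one position and $\mathbf{x}$ (as an $n\times1$ matrix) in the other $m-2$ positions. Quadratic convergence means there is a constant $C>0$ with $\|\mathbf{x}_{k+1}-\mathbf{x}\|\le C\|\mathbf{x}_k-\mathbf{x}\|^2$ for all sufficiently large $k$. *)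

theory Defs
  imports "HOL-Analysis.Analysis"
begin

text \<open>An order-m tensor with every dimension of size CARD('n) is a function on index
lists of length m; P (i1 # i2 # ... # im) = p_{i1 i2 ... im}.\<close>

definition transition_tensor :: "nat \<Rightarrow> ('n::finite list \<Rightarrow> real) \<Rightarrow> bool" where
  "transition_tensor m P \<longleftrightarrow>
     (\<forall>is. length is = m \<longrightarrow> P is \<ge> 0) \<and>
     (\<forall>js. length js = m - 1 \<longrightarrow> (\<Sum>i\<in>UNIV. P (i # js)) = 1)"

definition stochastic :: "real ^ 'n::finite \<Rightarrow> bool" where
  "stochastic v \<longleftrightarrow> (\<forall>i. v $ i \<ge> 0) \<and> (\<Sum>i\<in>UNIV. v $ i) = 1"

text \<open>Flattening R along the first index, applied to y(2) \<otimes> ... \<otimes> y(m),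
  where ys = [y(2), ..., y(m)] (a list of m-1 vectors).\<close>
definition flat_apply :: "nat \<Rightarrow> ('n::finite list \<Rightarrow> real) \<Rightarrow> (real ^ 'n) list \<Rightarrow> real ^ 'n" where
  "flat_apply m P ys = (\<chi> i. \<Sum>js\<in>{js. length js = m - 1}.
        P (i # js) * (\<Prod>k<m - 1. (ys ! k) $ (js ! k)))"

definition mlpr_f :: "nat \<Rightarrow> ('n::finite list \<Rightarrow> real) \<Rightarrow> real \<Rightarrow> real ^ 'n \<Rightarrow> real ^ 'n \<Rightarrow> real ^ 'n" where
  "mlpr_f m P \<alpha> v x = \<alpha> *\<^sub>R flat_apply m P (replicate (m - 1) x) + (1 - \<alpha>) *\<^sub>R v - x"

text \<open>The matrix R (x \<otimes> .. \<otimes> I \<otimes> .. \<otimes> x) with I in position j (0-based among the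
  m-1 factors): its column l is R (x \<otimes> .. \<otimes> e_l \<otimes> .. \<otimes> x).\<close>
definition flat_I_at :: "nat \<Rightarrow> ('n::finite list \<Rightarrow> real) \<Rightarrow> nat \<Rightarrow> real ^ 'n \<Rightarrow> real ^ 'n ^ 'n" where
  "flat_I_at m P j x = (\<chi> i l. flat_apply m P ((replicate (m - 1) x)[j := axis l 1]) $ i)"

definition mlpr_J :: "nat \<Rightarrow> ('n::finite list \<Rightarrow> real) \<Rightarrow> real \<Rightarrow> real ^ 'n \<Rightarrow> real ^ 'n ^ 'n" where
  "mlpr_J m P \<alpha> x = \<alpha> *\<^sub>R (\<Sum>j<m - 1. flat_I_at m P j x) - mat 1"

end

theory Submission
  imports Defs
begin

(* Started at 0, the Newton iterates increase and stay below every stochastic solution.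
   Two facts give this: the Jacobian is B - I with B = alpha R (sum of the Kronecker products)
   entrywise nonnegative with column sums at most alpha (m - 1) < 1, so (I - B)^-1 is
   nonnegative; and x |-> R (x \<otimes> ... \<otimes> x) is convex on the nonnegative orthant, i.e. lies
   above its first-order expansion.  Because the columns of R sum to one, the coordinate sums
   s_k of the iterates follow exactly the scalar Newton iteration for
   alpha s^(m-1) + (1 - alpha) - s = 0, which converges to 1 linearly from the start and
   quadratically in the end.  Since the iterates lie below their limit, the l1-error equals
   1 - s_k, whence quadratic convergence; the limit is the unique stochastic solution since
   every stochastic solution dominates it and has the same coordinate sum. *)

lemma prod_ge_first_order_expansion:
  fixes a b :: "'i \<Rightarrow> real"
  assumes "finite S" and "\<And>k. k \<in> S \<Longrightarrow> 0 \<le> a k" and "\<And>k. k \<in> S \<Longrightarrow> a k \<le> b k"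
  shows "(\<Prod>k\<in>S. a k) + (\<Sum>j\<in>S. (b j - a j) * (\<Prod>k\<in>S - {j}. a k)) \<le> (\<Prod>k\<in>S. b k)"
  using assms
proof (induction S rule: finite_induct)
  case empty
  then show ?case by simp
next
  case (insert i S)
  have IH: "(\<Prod>k\<in>S. a k) + (\<Sum>j\<in>S. (b j - a j) * (\<Prod>k\<in>S - {j}. a k)) \<le> (\<Prod>k\<in>S. b k)"
    using insert by auto
  have prod_le: "(\<Prod>k\<in>S. a k) \<le> (\<Prod>k\<in>S. b k)"
    using insert by (intro prod_mono) auto
  have ai: "0 \<le> a i" "a i \<le> b i" using insert by auto
  have "(\<Sum>j\<in>S. (b j - a j) * (\<Prod>k\<in>insert i S - {j}. a k))
      = a i * (\<Sum>j\<in>S. (b j - a j) * (\<Prod>k\<in>S - {j}. a k))"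
    unfolding sum_distrib_left
  proof (rule sum.cong)
    fix j assume "j \<in> S"
    then have "insert i S - {j} = insert i (S - {j})" using insert by auto
    then show "(b j - a j) * (\<Prod>k\<in>insert i S - {j}. a k) = a i * ((b j - a j) * (\<Prod>k\<in>S - {j}. a k))"
      using insert by simp
  qed simp
  moreover have "insert i S - {i} = S" using insert by auto
  ultimately have "(\<Prod>k\<in>insert i S. a k) + (\<Sum>j\<in>insert i S. (b j - a j) * (\<Prod>k\<in>insert i S - {j}. a k))
      = a i * ((\<Prod>k\<in>S. a k) + (\<Sum>j\<in>S. (b j - a j) * (\<Prod>k\<in>S - {j}. a k))) + (b i - a i) * (\<Prod>k\<in>S. a k)"
    using insert by (simp add: algebra_simps)
  also have "\<dots> \<le> a i * (\<Prod>k\<in>S. b k) + (b i - a i) * (\<Prod>k\<in>S. b k)"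
    using IH prod_le ai by (intro add_mono mult_left_mono) auto
  also have "\<dots> = (\<Prod>k\<in>insert i S. b k)"
    using insert by (simp add: algebra_simps)
  finally show ?case .
qed

lemma sum_length_lists_prod:
  fixes F :: "nat \<Rightarrow> 'n::finite \<Rightarrow> 'a::comm_semiring_1"
  shows "(\<Sum>js\<in>{js::'n list. length js = L}. \<Prod>k<L. F k (js ! k)) = (\<Prod>k<L. \<Sum>i\<in>UNIV. F k i)"
proof (induction L arbitrary: F)
  case 0
  then show ?case by simp
next
  case (Suc L)
  have lists_Suc: "{js::'n list. length js = Suc L} = case_prod (#) ` (UNIV \<times> {js. length js = L})"
    by (auto simp: length_Suc_conv image_iff)
  have "inj_on (case_prod (#)) (UNIV \<times> {js::'n list. length js = L})"
    by (auto simp: inj_on_def)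
  then have "(\<Sum>js\<in>{js::'n list. length js = Suc L}. \<Prod>k<Suc L. F k (js ! k))
      = (\<Sum>(a, js)\<in>UNIV \<times> {js::'n list. length js = L}. F 0 a * (\<Prod>k<L. F (Suc k) (js ! k)))"
    unfolding lists_Suc by (simp only: sum.reindex comp_def case_prod_unfold prod.lessThan_Suc_shift
        nth_Cons_0 nth_Cons_Suc fst_conv snd_conv)
  also have "\<dots> = (\<Sum>a\<in>UNIV. F 0 a) * (\<Prod>k<L. \<Sum>i\<in>UNIV. F (Suc k) i)"
    by (simp add: sum.cartesian_product[symmetric] sum_distrib_left[symmetric] sum_distrib_right
        Suc.IH[of "\<lambda>k. F (Suc k)"])
  also have "\<dots> = (\<Prod>k<Suc L. \<Sum>i\<in>UNIV. F k i)"
    by (simp only: prod.lessThan_Suc_shift)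
  finally show ?case .
qed

lemma prod_list_update:
  assumes "j < L" and "length ys = L"
  shows "(\<Prod>k<L. H k (ys[j := y] ! k)) = H j y * (\<Prod>k\<in>{..<L} - {j}. H k (ys ! k))"
  using assms by (subst prod.remove[of _ j]) (auto intro!: prod.cong simp: nth_list_update)

lemma incseq_vec_convergent:
  fixes X :: "nat \<Rightarrow> real ^ 'n::finite"
  assumes "incseq X" and "\<And>k. X k \<le> b"
  obtains L where "X \<longlonglongrightarrow> L" and "\<And>k. X k \<le> L"
proof -
  have "\<exists>l. (\<lambda>k. X k $ i) \<longlonglongrightarrow> l \<and> (\<forall>k. X k $ i \<le> l)" for i
  proof (rule incseq_convergent)
    show "incseq (\<lambda>k. X k $ i)"
      using assms(1) by (simp add: incseq_def less_eq_vec_def)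
    show "\<forall>k. X k $ i \<le> b $ i"
      using assms(2) by (simp add: less_eq_vec_def)
  qed blast
  then obtain l where l: "\<And>i. (\<lambda>k. X k $ i) \<longlonglongrightarrow> l i" "\<And>i k. X k $ i \<le> l i"
    by metis
  show ?thesis
  proof
    show "X \<longlonglongrightarrow> (\<chi> i. l i)"
      by (rule vec_tendstoI) (simp add: l(1))
    show "X k \<le> (\<chi> i. l i)" for k
      by (simp add: less_eq_vec_def l(2))
  qed
qed

lemma LIMSEQ_vec_le_const:
  fixes X :: "nat \<Rightarrow> 'a::linorder_topology ^ 'n::finite"
  assumes "X \<longlonglongrightarrow> x" and "\<And>k. a \<le> X k"
  shows "a \<le> x"
  using assms unfolding less_eq_vec_def
  by (auto intro: LIMSEQ_le_const[OF tendsto_vec_nth])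

lemma LIMSEQ_vec_le_const2:
  fixes X :: "nat \<Rightarrow> 'a::linorder_topology ^ 'n::finite"
  assumes "X \<longlonglongrightarrow> x" and "\<And>k. X k \<le> a"
  shows "x \<le> a"
  using assms unfolding less_eq_vec_def
  by (auto intro: LIMSEQ_le_const2[OF tendsto_vec_nth])

lemma matrix_inv_mult_right:
  fixes A :: "'a::semiring_1 ^ 'n::finite ^ 'n"
  assumes "invertible A"
  shows "A *v (matrix_inv A *v y) = y"
proof -
  have "A ** matrix_inv A = mat 1"
    using assms unfolding invertible_def matrix_inv_def by (rule someI_ex[THEN conjunct1])
  then show ?thesis by (metis matrix_vector_mul_assoc matrix_vector_mul_lid)
qed

lemma nonneg_if_id_minus_substochastic_nonneg:
  fixes B :: "real ^ 'n::finite ^ 'n"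
  assumes B_nonneg: "\<And>i l. 0 \<le> B $ i $ l" and col_sum: "\<And>l. (\<Sum>i\<in>UNIV. B $ i $ l) \<le> c"
    and "c < 1" and "0 \<le> z - B *v z"
  shows "0 \<le> z"
proof (rule ccontr)
  \<comment> \<open>The column bound gives c S \<le> S for the sum S < 0 of the negative coordinates of z.\<close>
  define N where "N = {i. z $ i < 0}"
  define S where "S = (\<Sum>i\<in>N. z $ i)"
  assume "\<not> 0 \<le> z"
  then obtain i where "i \<in> N" by (auto simp: less_eq_vec_def N_def not_le)
  then have "0 < (\<Sum>i\<in>N. - z $ i)"
    by (intro sum_pos) (auto simp: N_def)
  then have "S < 0"
    by (simp add: S_def sum_negf)
  have "S \<ge> (\<Sum>i\<in>N. (B *v z) $ i)"
    using assms(4) unfolding S_def by (intro sum_mono) (simp add: less_eq_vec_def)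
  also have "(\<Sum>i\<in>N. (B *v z) $ i) \<ge> (\<Sum>i\<in>N. \<Sum>l\<in>N. B $ i $ l * z $ l)"
    unfolding matrix_vector_mult_def vec_lambda_beta
    by (intro sum_mono sum_mono2) (auto simp: N_def not_less intro!: mult_nonneg_nonneg B_nonneg)
  also have "(\<Sum>i\<in>N. \<Sum>l\<in>N. B $ i $ l * z $ l) = (\<Sum>l\<in>N. z $ l * (\<Sum>i\<in>N. B $ i $ l))"
    by (subst sum.swap) (simp add: sum_distrib_left mult.commute)
  also have "\<dots> \<ge> (\<Sum>l\<in>N. z $ l * c)"
  proof (rule sum_mono)
    fix l assume "l \<in> N"
    moreover have "(\<Sum>i\<in>N. B $ i $ l) \<le> c"
      using sum_mono2[of UNIV N "\<lambda>i. B $ i $ l"] col_sum[of l] B_nonneg by auto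
    ultimately show "z $ l * c \<le> z $ l * (\<Sum>i\<in>N. B $ i $ l)"
      by (intro mult_left_mono_neg) (auto simp: N_def)
  qed
  finally have "c * S \<le> S"
    by (simp add: S_def sum_distrib_left mult.commute)
  with \<open>S < 0\<close> \<open>c < 1\<close> show False
    by (simp add: mult_le_cancel_right)
qed

lemma invertible_substochastic_minus_id:
  fixes B :: "real ^ 'n::finite ^ 'n"
  assumes "\<And>i l. 0 \<le> B $ i $ l" and "\<And>l. (\<Sum>i\<in>UNIV. B $ i $ l) \<le> c" and "c < 1"
  shows "invertible (B - mat 1)"
proof -
  have "inj ((*v) (B - mat 1))"
  proof (rule injI)
    fix z z' :: "real ^ 'n"
    assume "(B - mat 1) *v z = (B - mat 1) *v z'"
    then have "(z - z') - B *v (z - z') = 0" "(z' - z) - B *v (z' - z) = 0"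
      by (simp_all add: matrix_vector_mult_diff_rdistrib matrix_vector_mult_diff_distrib algebra_simps)
    then have "0 \<le> z - z'" "0 \<le> z' - z"
      by (metis order_refl nonneg_if_id_minus_substochastic_nonneg[OF assms])+
    then show "z = z'" by simp
  qed
  then show ?thesis
    using matrix_left_invertible_injective invertible_left_inverse by blast
qed

lemma power_taylor_remainder_bounds:
  fixes s :: real
  assumes "0 \<le> s" "s \<le> 1" and "N \<ge> 1"
  shows "0 \<le> 1 - s ^ N - real N * s ^ (N - 1) * (1 - s)"
    and "1 - s ^ N - real N * s ^ (N - 1) * (1 - s) \<le> real N * (1 - s) * (1 - s ^ (N - 1))"
proof -
  have remainder: "1 - s ^ N - real N * s ^ (N - 1) * (1 - s) = (1 - s) * (\<Sum>i<N. s ^ i - s ^ (N - 1))"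
    by (simp add: one_diff_power_eq sum_subtractf algebra_simps)
  have "0 \<le> s ^ i - s ^ (N - 1)" "s ^ i - s ^ (N - 1) \<le> 1 - s ^ (N - 1)" if "i < N" for i
    using that assms by (simp_all add: power_decreasing power_le_one)
  then have "0 \<le> (\<Sum>i<N. s ^ i - s ^ (N - 1))" "(\<Sum>i<N. s ^ i - s ^ (N - 1)) \<le> real N * (1 - s ^ (N - 1))"
    using sum_mono[of "{..<N}" "\<lambda>i. s ^ i - s ^ (N - 1)" "\<lambda>i. 1 - s ^ (N - 1)"]
    by (auto intro: sum_nonneg)
  moreover have "0 \<le> 1 - s" using assms by simp
  ultimately show "0 \<le> 1 - s ^ N - real N * s ^ (N - 1) * (1 - s)"
    and "1 - s ^ N - real N * s ^ (N - 1) * (1 - s) \<le> real N * (1 - s) * (1 - s ^ (N - 1))"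
    unfolding remainder by (simp_all add: mult_left_mono[of _ _ "1 - s", THEN order_trans] mult_ac)
qed

lemma scalar_newton_step_bounds:
  fixes s s' \<alpha> :: real
  assumes s: "0 \<le> s" "s \<le> 1" and N: "N \<ge> 1" and "0 \<le> \<alpha>" and "\<alpha> * real N < 1"
    and newton: "(s' - s) * (1 - \<alpha> * real N * s ^ (N - 1)) = \<alpha> * s ^ N + (1 - \<alpha>) - s"
  shows "s' \<le> 1" and "1 - s' \<le> \<alpha> * real N * (1 - s)"
    and "1 - s' \<le> \<alpha> * real N ^ 2 / (1 - \<alpha> * real N) * (1 - s) ^ 2"
proof -
  define t where "t = s ^ (N - 1)"
  define den where "den = 1 - \<alpha> * real N * t"
  define Q where "Q = 1 - s ^ N - real N * t * (1 - s)"
  have t: "0 \<le> t" "t \<le> 1" unfolding t_def using s by (auto intro: power_le_one)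
  have Q: "0 \<le> Q" "Q \<le> real N * (1 - s) * (1 - t)"
    using power_taylor_remainder_bounds[OF s N] unfolding Q_def t_def by auto
  have den: "1 - \<alpha> * real N \<le> den" "1 - t \<le> den"
    using t assms(4,5) mult_left_le[of t "\<alpha> * real N"] mult_right_mono[of "\<alpha> * real N" 1 t]
    unfolding den_def by auto
  then have "0 < den" using assms(5) by linarith
  have defect: "1 - s' = \<alpha> * Q / den"
    using newton \<open>0 < den\<close> unfolding den_def Q_def t_def by (simp add: field_simps)
  have "0 \<le> \<alpha> * Q / den"
    using Q(1) \<open>0 < den\<close> assms(4) by simp
  then show "s' \<le> 1"
    using defect by simp
  have "\<alpha> * Q \<le> \<alpha> * real N * (1 - s) * (1 - t)"
    using Q(2) assms(4) by (simp add: mult_left_mono mult.assoc)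
  also have "\<dots> \<le> \<alpha> * real N * (1 - s) * den"
    using den(2) s assms(4) by (intro mult_left_mono) auto
  finally show "1 - s' \<le> \<alpha> * real N * (1 - s)"
    using defect \<open>0 < den\<close> by (simp add: divide_le_eq)
  have "1 - t \<le> real N * (1 - s)"
    using Bernoulli_inequality[of "s - 1" "N - 1"] s N unfolding t_def by (simp add: of_nat_diff algebra_simps)
  then have "real N * (1 - s) * (1 - t) \<le> real N * (1 - s) * (real N * (1 - s))"
    using s by (intro mult_left_mono) auto
  then have "Q \<le> real N ^ 2 * (1 - s) ^ 2"
    using Q(2) by (simp add: power2_eq_square mult_ac)
  then have "1 - s' \<le> \<alpha> * (real N ^ 2 * (1 - s) ^ 2) / den"
    unfolding defect using \<open>0 < den\<close> assms(4) by (intro divide_right_mono mult_left_mono) auto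
  also have "\<dots> \<le> \<alpha> * (real N ^ 2 * (1 - s) ^ 2) / (1 - \<alpha> * real N)"
    using den(1) assms(4,5) by (intro divide_left_mono) auto
  finally show "1 - s' \<le> \<alpha> * real N ^ 2 / (1 - \<alpha> * real N) * (1 - s) ^ 2"
    by simp
qed

definition coord_sum :: "real ^ 'n::finite \<Rightarrow> real" where
  "coord_sum x = (\<Sum>i\<in>UNIV. x $ i)"

lemma coord_sum_add [simp]: "coord_sum (x + y) = coord_sum x + coord_sum y"
  by (simp add: coord_sum_def sum.distrib)

lemma coord_sum_diff [simp]: "coord_sum (x - y) = coord_sum x - coord_sum y"
  by (simp add: coord_sum_def sum_subtractf)

lemma coord_sum_scaleR [simp]: "coord_sum (a *\<^sub>R x) = a * coord_sum x"
  by (simp add: coord_sum_def sum_distrib_left)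

lemma coord_sum_zero [simp]: "coord_sum 0 = 0"
  by (simp add: coord_sum_def)

lemma stochastic_iff: "stochastic x \<longleftrightarrow> 0 \<le> x \<and> coord_sum x = 1"
  by (simp add: stochastic_def coord_sum_def less_eq_vec_def)

lemma nth_le_coord_sum: "0 \<le> x \<Longrightarrow> x $ i \<le> coord_sum x"
  unfolding coord_sum_def less_eq_vec_def by (intro member_le_sum) auto

lemma coord_sum_nonneg: "0 \<le> x \<Longrightarrow> 0 \<le> coord_sum x"
  unfolding coord_sum_def less_eq_vec_def by (simp add: sum_nonneg)

lemma norm_le_coord_sum: "0 \<le> x \<Longrightarrow> norm x \<le> coord_sum x"
  using norm_le_l1_cart[of x] unfolding coord_sum_def less_eq_vec_def by simp

lemma coord_sum_le_card_norm: "coord_sum x \<le> real CARD('n) * norm (x :: real ^ 'n::finite)"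
  using sum_mono[of UNIV "\<lambda>i. x $ i" "\<lambda>i. norm x"] component_le_norm_cart[of x]
  unfolding coord_sum_def by (simp add: abs_le_iff)

lemma eq_if_le_coord_sum_eq:
  assumes "x \<le> y" and "coord_sum x = coord_sum y"
  shows "x = y"
proof -
  have "(\<Sum>i\<in>UNIV. (y - x) $ i) = 0"
    using assms(2) unfolding coord_sum_def by (simp add: sum_subtractf)
  then have "\<forall>i. (y - x) $ i = 0"
    using assms(1) by (subst (asm) sum_nonneg_eq_0_iff) (auto simp: less_eq_vec_def)
  then show ?thesis by (simp add: vec_eq_iff)
qed

lemma tendsto_coord_sum: "X \<longlonglongrightarrow> x \<Longrightarrow> (\<lambda>k. coord_sum (X k)) \<longlonglongrightarrow> coord_sum x"
  unfolding coord_sum_def by (intro tendsto_intros)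

definition flat_deriv :: "nat \<Rightarrow> ('n::finite list \<Rightarrow> real) \<Rightarrow> real ^ 'n \<Rightarrow> real ^ 'n \<Rightarrow> real ^ 'n" where
  "flat_deriv m P x d = (\<Sum>j<m - 1. flat_apply m P ((replicate (m - 1) x)[j := d]))"

lemma flat_apply_update_nth:
  assumes "j < m - 1" and "length ys = m - 1"
  shows "flat_apply m P (ys[j := d]) $ i =
    (\<Sum>js | length js = m - 1. P (i # js) * (d $ (js ! j) * (\<Prod>k\<in>{..<m - 1} - {j}. ys ! k $ (js ! k))))"
  unfolding flat_apply_def vec_lambda_beta
  using assms by (intro sum.cong refl arg_cong2[where f = "(*)"] prod_list_update)

lemma linear_flat_apply_update:
  assumes "j < m - 1" and "length ys = m - 1"
  shows "linear (\<lambda>d. flat_apply m P (ys[j := d]))"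
  by (rule linearI)
    (simp_all add: vec_eq_iff flat_apply_update_nth[OF assms] algebra_simps sum.distrib sum_distrib_left)

lemma linear_flat_deriv: "linear (flat_deriv m P x)"
  unfolding flat_deriv_def[abs_def]
  by (intro linear_compose_sum) (simp add: linear_flat_apply_update)

lemma sum_flat_I_at_eq_matrix: "(\<Sum>j<m - 1. flat_I_at m P j x) = matrix (flat_deriv m P x)"
  by (simp add: vec_eq_iff matrix_def flat_I_at_def flat_deriv_def sum_component)

lemma mlpr_J_eq: "mlpr_J m P \<alpha> x = \<alpha> *\<^sub>R matrix (flat_deriv m P x) - mat 1"
  unfolding mlpr_J_def sum_flat_I_at_eq_matrix ..

lemma mlpr_J_mult: "mlpr_J m P \<alpha> x *v d = \<alpha> *\<^sub>R flat_deriv m P x d - d"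
proof -
  have "matrix (flat_deriv m P x) *v d = flat_deriv m P x d"
    by (metis matrix_vector_mul(2) linear_flat_deriv)
  then show ?thesis
    by (simp add: mlpr_J_eq matrix_vector_mult_diff_rdistrib scaleR_matrix_vector_assoc[symmetric])
qed

lemma coord_sum_flat_apply:
  assumes "transition_tensor m P"
  shows "coord_sum (flat_apply m P ys) = (\<Prod>k<m - 1. coord_sum (ys ! k))"
proof -
  have "coord_sum (flat_apply m P ys)
      = (\<Sum>js | length js = m - 1. \<Sum>i\<in>UNIV. P (i # js) * (\<Prod>k<m - 1. ys ! k $ (js ! k)))"
    unfolding coord_sum_def flat_apply_def vec_lambda_beta by (rule sum.swap)
  also have "\<dots> = (\<Sum>js | length js = m - 1. \<Prod>k<m - 1. ys ! k $ (js ! k))"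
    using assms unfolding transition_tensor_def by (simp add: sum_distrib_right[symmetric])
  also have "\<dots> = (\<Prod>k<m - 1. coord_sum (ys ! k))"
    unfolding coord_sum_def by (rule sum_length_lists_prod)
  finally show ?thesis .
qed

lemma coord_sum_flat_apply_replicate:
  "transition_tensor m P \<Longrightarrow> coord_sum (flat_apply m P (replicate (m - 1) x)) = coord_sum x ^ (m - 1)"
  by (simp add: coord_sum_flat_apply)

lemma coord_sum_flat_deriv:
  assumes "transition_tensor m P"
  shows "coord_sum (flat_deriv m P x d) = real (m - 1) * coord_sum x ^ (m - 2) * coord_sum d"
proof -
  have "coord_sum (flat_apply m P ((replicate (m - 1) x)[j := d])) = coord_sum d * coord_sum x ^ (m - 2)"
    if "j < m - 1" for j
    using that prod_list_update[of j "m - 1" "replicate (m - 1) x" "\<lambda>k. coord_sum" d]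
    by (simp add: coord_sum_flat_apply[OF assms] numeral_2_eq_2)
  then show ?thesis
    unfolding flat_deriv_def coord_sum_def sum_component
    by (subst sum.swap) (simp add: coord_sum_def[symmetric])
qed

lemma flat_apply_nonneg:
  assumes "transition_tensor m P" and "m \<ge> 1" and "length ys = m - 1" and "\<And>y. y \<in> set ys \<Longrightarrow> 0 \<le> y"
  shows "0 \<le> flat_apply m P ys"
  using assms unfolding flat_apply_def transition_tensor_def less_eq_vec_def
  by (auto intro!: sum_nonneg mult_nonneg_nonneg prod_nonneg)

lemma flat_deriv_nonneg:
  assumes "transition_tensor m P" and "m \<ge> 1" and "0 \<le> x" and "0 \<le> d"
  shows "0 \<le> flat_deriv m P x d"
  unfolding flat_deriv_def using assms
  by (intro sum_nonneg flat_apply_nonneg) (auto dest: set_update_subset_insert[THEN subsetD])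

lemma flat_deriv_nth:
  "flat_deriv m P x d $ i = (\<Sum>js | length js = m - 1. P (i # js) *
      (\<Sum>j<m - 1. d $ (js ! j) * (\<Prod>k\<in>{..<m - 1} - {j}. x $ (js ! k))))"
  unfolding flat_deriv_def sum_component sum_distrib_left
  by (subst sum.swap) (simp add: flat_apply_update_nth)

lemma flat_apply_replicate_nth:
  "flat_apply m P (replicate (m - 1) x) $ i = (\<Sum>js | length js = m - 1. P (i # js) * (\<Prod>k<m - 1. x $ (js ! k)))"
  unfolding flat_apply_def by simp

lemma flat_apply_replicate_convex:
  assumes "transition_tensor m P" and "m \<ge> 1" and "0 \<le> x" and "x \<le> y"
  shows "flat_apply m P (replicate (m - 1) x) + flat_deriv m P x (y - x) \<le> flat_apply m P (replicate (m - 1) y)"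
  unfolding less_eq_vec_def vector_add_component flat_deriv_nth
proof
  fix i
  have "P (i # js) * ((\<Prod>k<m - 1. x $ (js ! k))
        + (\<Sum>j<m - 1. (y - x) $ (js ! j) * (\<Prod>k\<in>{..<m - 1} - {j}. x $ (js ! k))))
      \<le> P (i # js) * (\<Prod>k<m - 1. y $ (js ! k))" if "length js = m - 1" for js
    using that assms prod_ge_first_order_expansion[of "{..<m - 1}" "\<lambda>k. x $ (js ! k)" "\<lambda>k. y $ (js ! k)"]
    unfolding transition_tensor_def less_eq_vec_def by (auto intro!: mult_left_mono)
  then show "flat_apply m P (replicate (m - 1) x) $ i + (\<Sum>js | length js = m - 1. P (i # js) *
        (\<Sum>j<m - 1. (y - x) $ (js ! j) * (\<Prod>k\<in>{..<m - 1} - {j}. x $ (js ! k))))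
      \<le> flat_apply m P (replicate (m - 1) y) $ i"
    unfolding flat_apply_replicate_nth sum.distrib[symmetric]
    by (intro sum_mono) (simp add: distrib_left)
qed

lemma tendsto_flat_apply_replicate:
  assumes "X \<longlonglongrightarrow> x"
  shows "(\<lambda>k. flat_apply m P (replicate (m - 1) (X k))) \<longlonglongrightarrow> flat_apply m P (replicate (m - 1) x)"
proof (rule vec_tendstoI)
  fix i
  have "\<And>j. (\<lambda>k. X k $ j) \<longlonglongrightarrow> x $ j"
    using assms by (rule tendsto_vec_nth)
  then show "(\<lambda>k. flat_apply m P (replicate (m - 1) (X k)) $ i) \<longlonglongrightarrow> flat_apply m P (replicate (m - 1) x) $ i"
    unfolding flat_apply_replicate_nth by (intro tendsto_sum tendsto_mult tendsto_const tendsto_prod)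
qed

locale multilinear_pagerank =
  fixes m :: nat and P :: "'n::finite list \<Rightarrow> real" and v :: "real ^ 'n" and \<alpha> :: real
  assumes order_ge_2: "m \<ge> 2" and transition: "transition_tensor m P" and stochastic_v: "stochastic v"
    and alpha_nonneg: "0 \<le> \<alpha>" and alpha_small: "\<alpha> * real (m - 1) < 1"
begin

abbreviation "G x \<equiv> \<alpha> *\<^sub>R flat_apply m P (replicate (m - 1) x) + (1 - \<alpha>) *\<^sub>R v"
abbreviation "f \<equiv> mlpr_f m P \<alpha> v"
abbreviation "J \<equiv> mlpr_J m P \<alpha>"
abbreviation "D \<equiv> flat_deriv m P"
abbreviation "newton x \<equiv> x - matrix_inv (J x) *v f x"

lemma alpha_less_1: "\<alpha> < 1"
  using alpha_small alpha_nonneg order_ge_2 mult_left_mono[of 1 "real (m - 1)" \<alpha>] by auto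

lemma f_eq: "f x = G x - x"
  by (simp add: mlpr_f_def)

lemma coord_sum_f: "coord_sum (f x) = \<alpha> * coord_sum x ^ (m - 1) + (1 - \<alpha>) - coord_sum x"
  using stochastic_v unfolding f_eq coord_sum_add coord_sum_diff coord_sum_scaleR
    coord_sum_flat_apply_replicate[OF transition] stochastic_iff by simp

lemma D_diff: "D x (a - b) = D x a - D x b"
  by (rule linear_diff[OF linear_flat_deriv])

lemma scaled_deriv_matrix_substochastic:
  assumes "0 \<le> x" and "coord_sum x \<le> 1"
  shows "0 \<le> (\<alpha> *\<^sub>R matrix (D x)) $ i $ l"
    and "(\<Sum>i\<in>UNIV. (\<alpha> *\<^sub>R matrix (D x)) $ i $ l) \<le> \<alpha> * real (m - 1)"
proof -
  have "0 \<le> (axis l 1 :: real ^ 'n)" by (simp add: less_eq_vec_def axis_def)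
  then show "0 \<le> (\<alpha> *\<^sub>R matrix (D x)) $ i $ l"
    using flat_deriv_nonneg[OF transition _ assms(1)] order_ge_2 alpha_nonneg
    by (simp add: matrix_def less_eq_vec_def)
  have "coord_sum x ^ (m - 2) \<le> 1"
    using assms by (simp add: coord_sum_nonneg power_le_one)
  then have "\<alpha> * (real (m - 1) * coord_sum x ^ (m - 2)) \<le> \<alpha> * real (m - 1)"
    using alpha_nonneg mult_left_mono[of _ 1 "real (m - 1)"] by (simp add: mult_left_mono)
  moreover have "coord_sum (axis l 1 :: real ^ 'n) = 1"
    by (simp add: coord_sum_def axis_def)
  ultimately show "(\<Sum>i\<in>UNIV. (\<alpha> *\<^sub>R matrix (D x)) $ i $ l) \<le> \<alpha> * real (m - 1)"
    using coord_sum_flat_deriv[OF transition, of x "axis l 1"]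
    by (simp add: matrix_def coord_sum_def sum_distrib_left[symmetric])
qed

lemma invertible_J:
  assumes "0 \<le> x" and "coord_sum x \<le> 1"
  shows "invertible (J x)"
proof -
  have "invertible (\<alpha> *\<^sub>R matrix (D x) - mat 1)"
    by (rule invertible_substochastic_minus_id[OF scaled_deriv_matrix_substochastic[OF assms] alpha_small])
  then show ?thesis by (simp only: mlpr_J_eq)
qed

lemma nonneg_if_resolvent_nonneg:
  assumes "0 \<le> x" and "coord_sum x \<le> 1" and "0 \<le> z - \<alpha> *\<^sub>R D x z"
  shows "0 \<le> z"
proof -
  have "matrix (D x) *v z = D x z"
    by (metis matrix_vector_mul(2) linear_flat_deriv)
  then have "0 \<le> z - (\<alpha> *\<^sub>R matrix (D x)) *v z"
    using assms(3) by (simp only: scaleR_matrix_vector_assoc[symmetric])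
  then show ?thesis
    by (rule nonneg_if_id_minus_substochastic_nonneg[OF scaled_deriv_matrix_substochastic[OF assms(1,2)] alpha_small])
qed

lemma newton_step_equation:
  assumes "0 \<le> x" and "coord_sum x \<le> 1"
  shows "(newton x - x) - \<alpha> *\<^sub>R D x (newton x - x) = f x"
proof -
  define d where "d = matrix_inv (J x) *v f x"
  have "\<alpha> *\<^sub>R D x d - d = f x"
    using matrix_inv_mult_right[OF invertible_J[OF assms]] unfolding mlpr_J_mult d_def .
  moreover have "D x (- d) = - D x d"
    by (rule linear_neg[OF linear_flat_deriv])
  ultimately show ?thesis
    unfolding d_def[symmetric] by simp
qed

context
  fixes x x' :: "real ^ 'n"
  assumes x_nonneg: "0 \<le> x" and coord_sum_x: "coord_sum x \<le> 1"
    and step: "(x' - x) - \<alpha> *\<^sub>R D x (x' - x) = f x"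
begin

lemma newton_step_ge: "0 \<le> f x \<Longrightarrow> x \<le> x'"
  using nonneg_if_resolvent_nonneg[OF x_nonneg coord_sum_x, of "x' - x"] step by simp

lemma newton_step_f_nonneg:
  assumes "0 \<le> f x"
  shows "0 \<le> f x'"
proof -
  have "x' = G x + \<alpha> *\<^sub>R D x (x' - x)"
    using step unfolding f_eq by (simp add: algebra_simps)
  then have "f x' = \<alpha> *\<^sub>R (flat_apply m P (replicate (m - 1) x')
      - (flat_apply m P (replicate (m - 1) x) + D x (x' - x)))"
    unfolding f_eq by (simp add: algebra_simps)
  also have "0 \<le> \<dots>"
    using flat_apply_replicate_convex[OF transition _ x_nonneg newton_step_ge[OF assms]] order_ge_2 alpha_nonneg
    by (simp add: scaleR_nonneg_nonneg)
  finally show ?thesis .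
qed

lemma newton_step_le_fixed_point:
  assumes "x \<le> y" and "y = G y"
  shows "x' \<le> y"
proof -
  have "\<alpha> *\<^sub>R D x (y - x') = \<alpha> *\<^sub>R D x (y - x) - \<alpha> *\<^sub>R D x (x' - x)"
    by (metis D_diff diff_diff_eq2 diff_add_cancel scaleR_diff_right)
  then have "(y - x') - \<alpha> *\<^sub>R D x (y - x') = ((y - x) - \<alpha> *\<^sub>R D x (y - x)) - ((x' - x) - \<alpha> *\<^sub>R D x (x' - x))"
    by (simp add: algebra_simps)
  also have "\<dots> = (y - G x) - \<alpha> *\<^sub>R D x (y - x)"
    unfolding step f_eq by (simp add: algebra_simps)
  also have "\<dots> = \<alpha> *\<^sub>R (flat_apply m P (replicate (m - 1) y) - (flat_apply m P (replicate (m - 1) x) + D x (y - x)))"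
    by (subst (1) assms(2)) (simp add: algebra_simps)
  also have "0 \<le> \<dots>"
    using flat_apply_replicate_convex[OF transition _ x_nonneg assms(1)] order_ge_2 alpha_nonneg
    by (simp add: scaleR_nonneg_nonneg)
  finally have "0 \<le> y - x'"
    by (rule nonneg_if_resolvent_nonneg[OF x_nonneg coord_sum_x])
  then show ?thesis by simp
qed

lemma newton_step_coord_sum_bounds:
  shows "coord_sum x' \<le> 1"
    and "1 - coord_sum x' \<le> \<alpha> * real (m - 1) * (1 - coord_sum x)"
    and "1 - coord_sum x' \<le> \<alpha> * real (m - 1) ^ 2 / (1 - \<alpha> * real (m - 1)) * (1 - coord_sum x) ^ 2"
proof -
  have "coord_sum x' - coord_sum x - \<alpha> * (real (m - 1) * coord_sum x ^ (m - 2) * (coord_sum x' - coord_sum x))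
      = \<alpha> * coord_sum x ^ (m - 1) + (1 - \<alpha>) - coord_sum x"
    using arg_cong[OF step, of coord_sum]
    unfolding coord_sum_diff coord_sum_scaleR coord_sum_flat_deriv[OF transition] coord_sum_f .
  then have "(coord_sum x' - coord_sum x) * (1 - \<alpha> * real (m - 1) * coord_sum x ^ (m - 1 - 1))
      = \<alpha> * coord_sum x ^ (m - 1) + (1 - \<alpha>) - coord_sum x"
    by (simp add: algebra_simps numeral_2_eq_2)
  from scalar_newton_step_bounds[OF coord_sum_nonneg[OF x_nonneg] coord_sum_x _ alpha_nonneg alpha_small this]
  show "coord_sum x' \<le> 1"
    and "1 - coord_sum x' \<le> \<alpha> * real (m - 1) * (1 - coord_sum x)"
    and "1 - coord_sum x' \<le> \<alpha> * real (m - 1) ^ 2 / (1 - \<alpha> * real (m - 1)) * (1 - coord_sum x) ^ 2"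
    using order_ge_2 by auto
qed

end

end

locale multilinear_pagerank_newton = multilinear_pagerank m P v \<alpha>
  for m and P :: "'n::finite list \<Rightarrow> real" and v \<alpha> +
  fixes xk :: "nat \<Rightarrow> real ^ 'n"
  assumes xk_0: "xk 0 = 0"
    and xk_Suc: "\<And>k. xk (Suc k) = xk k - matrix_inv (mlpr_J m P \<alpha> (xk k)) *v mlpr_f m P \<alpha> v (xk k)"
begin

lemma iterate_invariant: "0 \<le> xk k \<and> coord_sum (xk k) \<le> 1 \<and> 0 \<le> f (xk k)"
proof (induction k)
  case 0
  have "0 \<le> flat_apply m P (replicate (m - 1) 0)"
    using order_ge_2 by (intro flat_apply_nonneg[OF transition]) auto
  then have "0 \<le> f 0"
    using alpha_nonneg alpha_less_1 stochastic_v
    by (auto simp: f_eq stochastic_iff intro!: add_nonneg_nonneg scaleR_nonneg_nonneg)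
  then show ?case by (simp add: xk_0)
next
  case (Suc k)
  then have "0 \<le> xk k" "coord_sum (xk k) \<le> 1" "0 \<le> f (xk k)" by auto
  moreover note step = newton_step_equation[OF this(1,2), folded xk_Suc]
  ultimately show ?case
    using newton_step_ge[OF _ _ step] newton_step_f_nonneg[OF _ _ step]
      newton_step_coord_sum_bounds(1)[OF _ _ step] order_trans by blast
qed

lemma iterate_nonneg: "0 \<le> xk k"
  and iterate_coord_sum_le_1: "coord_sum (xk k) \<le> 1"
  and iterate_f_nonneg: "0 \<le> f (xk k)"
  using iterate_invariant by auto

lemma iterate_step: "(xk (Suc k) - xk k) - \<alpha> *\<^sub>R D (xk k) (xk (Suc k) - xk k) = f (xk k)"
  using newton_step_equation[OF iterate_nonneg iterate_coord_sum_le_1] by (simp add: xk_Suc)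

lemma incseq_iterates: "incseq xk"
  by (rule incseq_SucI) (rule newton_step_ge[OF iterate_nonneg iterate_coord_sum_le_1 iterate_step iterate_f_nonneg])

lemma iterate_le_fixed_point:
  assumes "0 \<le> y" and "y = G y"
  shows "xk k \<le> y"
proof (induction k)
  case 0
  then show ?case using assms(1) by (simp add: xk_0)
next
  case (Suc k)
  then show ?case
    by (rule newton_step_le_fixed_point[OF iterate_nonneg iterate_coord_sum_le_1 iterate_step _ assms(2)])
qed

lemma iterate_defect_geometric: "1 - coord_sum (xk k) \<le> (\<alpha> * real (m - 1)) ^ k"
proof (induction k)
  case 0
  then show ?case by (simp add: xk_0)
next
  case (Suc k)
  have "1 - coord_sum (xk (Suc k)) \<le> \<alpha> * real (m - 1) * (1 - coord_sum (xk k))"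
    by (rule newton_step_coord_sum_bounds(2)[OF iterate_nonneg iterate_coord_sum_le_1 iterate_step])
  also have "\<dots> \<le> \<alpha> * real (m - 1) * (\<alpha> * real (m - 1)) ^ k"
    using Suc alpha_nonneg by (intro mult_left_mono) auto
  finally show ?case by simp
qed

lemma iterates_limit:
  obtains x where "xk \<longlonglongrightarrow> x" and "\<And>k. xk k \<le> x" and "stochastic x" and "x = G x"
proof -
  have "xk k \<le> 1" for k
    using nth_le_coord_sum[OF iterate_nonneg] iterate_coord_sum_le_1 order_trans
    by (fastforce simp: less_eq_vec_def)
  then obtain x where lim: "xk \<longlonglongrightarrow> x" and below: "\<And>k. xk k \<le> x"
    using incseq_vec_convergent[OF incseq_iterates] by blast
  have "0 \<le> x"
    using below[of 0] by (simp add: xk_0)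
  have "coord_sum x \<le> 1"
    by (rule LIMSEQ_le_const2[OF tendsto_coord_sum[OF lim]]) (simp add: iterate_coord_sum_le_1)
  moreover have "1 - coord_sum x \<le> 0"
  proof (rule LIMSEQ_le_const)
    show "(\<lambda>k. (\<alpha> * real (m - 1)) ^ k) \<longlonglongrightarrow> 0"
      using alpha_nonneg alpha_small by (intro LIMSEQ_power_zero) simp
    have "1 - coord_sum x \<le> 1 - coord_sum (xk k)" for k
      using below[of k] unfolding coord_sum_def less_eq_vec_def by (simp add: sum_mono)
    then show "\<exists>N. \<forall>k\<ge>N. 1 - coord_sum x \<le> (\<alpha> * real (m - 1)) ^ k"
      using iterate_defect_geometric order_trans by blast
  qed
  ultimately have coord_sum_x: "coord_sum x = 1" by simp
  have "(\<lambda>k. f (xk k)) \<longlonglongrightarrow> f x"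
    unfolding f_eq by (intro tendsto_intros tendsto_flat_apply_replicate lim)
  then have "0 \<le> f x"
    by (rule LIMSEQ_vec_le_const) (rule iterate_f_nonneg)
  moreover have "coord_sum (f x) = coord_sum 0"
    by (simp add: coord_sum_f coord_sum_x)
  ultimately have "f x = 0"
    using eq_if_le_coord_sum_eq by metis
  then have "x = G x" by (simp add: f_eq)
  with lim below \<open>0 \<le> x\<close> coord_sum_x show ?thesis
    using that by (simp add: stochastic_iff)
qed

lemma iterates_quadratic_convergence:
  assumes "\<And>k. xk k \<le> x" and "coord_sum x = 1"
  shows "\<exists>C>0. \<forall>k. norm (xk (Suc k) - x) \<le> C * (norm (xk k - x))\<^sup>2"
proof -
  define K where "K = \<alpha> * real (m - 1) ^ 2 / (1 - \<alpha> * real (m - 1))"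
  define C where "C = K * real CARD('n) ^ 2 + 1"
  have defect: "1 - coord_sum (xk k) = coord_sum (x - xk k)" for k
    using assms(2) by simp
  have "0 \<le> K" unfolding K_def using alpha_nonneg alpha_small by simp
  have "norm (xk (Suc k) - x) \<le> C * (norm (xk k - x))\<^sup>2" for k
  proof -
    have "norm (xk (Suc k) - x) \<le> 1 - coord_sum (xk (Suc k))"
      using norm_le_coord_sum[of "x - xk (Suc k)"] assms(1) by (simp add: defect norm_minus_commute)
    also have "\<dots> \<le> K * (1 - coord_sum (xk k))\<^sup>2"
      unfolding K_def by (rule newton_step_coord_sum_bounds(3)[OF iterate_nonneg iterate_coord_sum_le_1 iterate_step])
    also have "\<dots> \<le> K * (real CARD('n) * norm (xk k - x))\<^sup>2"
      using coord_sum_le_card_norm[of "x - xk k"] coord_sum_nonneg[of "x - xk k"] assms(1)[of k] \<open>0 \<le> K\<close>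
      by (intro mult_left_mono power_mono) (auto simp: defect norm_minus_commute)
    also have "\<dots> \<le> C * (norm (xk k - x))\<^sup>2"
      unfolding C_def by (simp add: power_mult_distrib algebra_simps)
    finally show ?thesis .
  qed
  moreover have "C > 0"
    unfolding C_def using \<open>0 \<le> K\<close> by (simp add: add_nonneg_pos)
  ultimately show ?thesis by blast
qed

end

theorem theorem3p3:
  fixes m :: nat and P :: "'n::finite list \<Rightarrow> real" and v :: "real ^ 'n"
    and \<alpha> :: real and xk :: "nat \<Rightarrow> real ^ 'n"
  assumes "m \<ge> 2"
    and "transition_tensor m P"
    and "stochastic v"
    and "0 \<le> \<alpha>" and "\<alpha> < 1" and "\<alpha> < 1 / (real m - 1)"
    and "xk 0 = 0"
    and "\<And>k. xk (Suc k) = xk k - matrix_inv (mlpr_J m P \<alpha> (xk k)) *v mlpr_f m P \<alpha> v (xk k)"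
  shows "\<exists>x. stochastic x \<and> x = \<alpha> *\<^sub>R flat_apply m P (replicate (m - 1) x) + (1 - \<alpha>) *\<^sub>R v
           \<and> (\<forall>y. stochastic y \<and> y = \<alpha> *\<^sub>R flat_apply m P (replicate (m - 1) y) + (1 - \<alpha>) *\<^sub>R v \<longrightarrow> y = x)
           \<and> (\<forall>k. invertible (mlpr_J m P \<alpha> (xk k)))
           \<and> xk \<longlonglongrightarrow> x
           \<and> (\<exists>C>0. \<forall>\<^sub>F k in sequentially. norm (xk (Suc k) - x) \<le> C * (norm (xk k - x))\<^sup>2)"
proof -
  have "\<alpha> * real (m - 1) < 1"
    using assms(1,6) by (simp add: of_nat_diff less_divide_eq)
  then interpret multilinear_pagerank_newton m P v \<alpha> xk
    using assms(1-4,7,8) by unfold_locales auto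
  obtain x where lim: "xk \<longlonglongrightarrow> x" and below: "\<And>k. xk k \<le> x" and "stochastic x" and "x = G x"
    using iterates_limit by blast
  have unique: "y = x" if "stochastic y" and "y = G y" for y
  proof (rule eq_if_le_coord_sum_eq[symmetric])
    show "x \<le> y"
      using that by (intro LIMSEQ_vec_le_const2[OF lim] iterate_le_fixed_point) (simp_all add: stochastic_iff)
    show "coord_sum x = coord_sum y"
      using that \<open>stochastic x\<close> by (simp add: stochastic_iff)
  qed
  obtain C where "C > 0" and "\<forall>k. norm (xk (Suc k) - x) \<le> C * (norm (xk k - x))\<^sup>2"
    using iterates_quadratic_convergence[OF below] \<open>stochastic x\<close> by (auto simp: stochastic_iff)
  then have "\<exists>C>0. \<forall>\<^sub>F k in sequentially. norm (xk (Suc k) - x) \<le> C * (norm (xk k - x))\<^sup>2"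
    by (auto intro: always_eventually)
  with \<open>stochastic x\<close> \<open>x = G x\<close> unique lim
  show ?thesis
    using invertible_J[OF iterate_nonneg iterate_coord_sum_le_1] by blast
qed

end
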